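(* For every integer $n>0$, the Hochschild lattice $\mathrm{Hoch}(n)$ has order dimension $n$.
   Context: For a finite directed graph $G$ without multiple edges, a maximal orthogonal pair is a pair $(X,Y)$ of disjoint subsets of the vertex set with no edge from a vertex of $X$ to a vertex of $Y$, maximal (under componentwise inclusion) for this property; these pairs ordered by $(X,Y)\le(X',Y')$ iff $X\subseteq X'$ form a lattice $L(G)$. $\mathrm{Hoch}(n):=L(G_n)$, where $G_n$ has vertices $\{(i,j)\mid i\in\{1,2\},\ i\le j\le n\}$ and edges $(i,j)\to(i',j')$ for $(i,j)\ne(i',j')$ whenever either $i=2$, $i'=1$, $j=j'$, or $i=i'=1$ and $j>j'$ (equivalently, $\mathrm{Hoch}(n)$ is the extremal lattice whose Galois graph is $G_n$). The order dimension of a poset $P$ is the least $d$ such that $P$ embeds as a subposet of $\mathbb R^d$ with the componentwise order. *)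

theory Defs
  imports Complex_Main
begin

text \<open>A digraph is given by a vertex set V and an edge relation E (E u v means an edge u to v).\<close>

definition orth_pair :: "'v set \<Rightarrow> ('v \<Rightarrow> 'v \<Rightarrow> bool) \<Rightarrow> 'v set \<times> 'v set \<Rightarrow> bool" where
  "orth_pair V E p \<longleftrightarrow> fst p \<subseteq> V \<and> snd p \<subseteq> V \<and> fst p \<inter> snd p = {} \<and>
     (\<forall>x\<in>fst p. \<forall>y\<in>snd p. \<not> E x y)"

definition max_orth_pair :: "'v set \<Rightarrow> ('v \<Rightarrow> 'v \<Rightarrow> bool) \<Rightarrow> 'v set \<times> 'v set \<Rightarrow> bool" where
  "max_orth_pair V E p \<longleftrightarrow> orth_pair V E p \<and>
     (\<forall>q. orth_pair V E q \<and> fst p \<subseteq> fst q \<and> snd p \<subseteq> snd q \<longrightarrow> q = p)"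

definition L_carrier :: "'v set \<Rightarrow> ('v \<Rightarrow> 'v \<Rightarrow> bool) \<Rightarrow> ('v set \<times> 'v set) set" where
  "L_carrier V E = {p. max_orth_pair V E p}"

definition L_le :: "'v set \<times> 'v set \<Rightarrow> 'v set \<times> 'v set \<Rightarrow> bool" where
  "L_le p q \<longleftrightarrow> fst p \<subseteq> fst q"

definition Gn_vertices :: "nat \<Rightarrow> (nat \<times> nat) set" where
  "Gn_vertices n = {(i, j). (i = 1 \<or> i = 2) \<and> i \<le> j \<and> j \<le> n}"

definition Gn_edge :: "nat \<Rightarrow> nat \<times> nat \<Rightarrow> nat \<times> nat \<Rightarrow> bool" where
  "Gn_edge n u v \<longleftrightarrow> u \<in> Gn_vertices n \<and> v \<in> Gn_vertices n \<and> u \<noteq> v \<and>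
     ((fst u = 2 \<and> fst v = 1 \<and> snd u = snd v) \<or>
      (fst u = 1 \<and> fst v = 1 \<and> snd u > snd v))"

definition Hoch :: "nat \<Rightarrow> ((nat \<times> nat) set \<times> (nat \<times> nat) set) set" where
  "Hoch n = L_carrier (Gn_vertices n) (Gn_edge n)"

definition embeds_in_Rd :: "'a set \<Rightarrow> ('a \<Rightarrow> 'a \<Rightarrow> bool) \<Rightarrow> nat \<Rightarrow> bool" where
  "embeds_in_Rd S le d \<longleftrightarrow>
     (\<exists>f :: 'a \<Rightarrow> (nat \<Rightarrow> real). inj_on f S \<and>
        (\<forall>x\<in>S. \<forall>y\<in>S. le x y \<longleftrightarrow> (\<forall>i<d. f x i \<le> f y i)))"

definition order_dimension :: "'a set \<Rightarrow> ('a \<Rightarrow> 'a \<Rightarrow> bool) \<Rightarrow> nat" where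
  "order_dimension S le = (LEAST d. embeds_in_Rd S le d)"

end

theory Submission
  imports Defs
begin

(* The first row of G_n is a transitive tournament, so the first-row part of every X in Hoch(n)
   is an initial segment (1,1), ..., (1,m), and X <= X' holds iff m <= m' and the second-row
   part of X is contained in that of X'.  Recording m together with the indicators of the
   second-row vertices (2,2), ..., (2,n) therefore embeds Hoch(n) into R^n.  Conversely, the
   elements with X = {(1,1)} or {(2,k)}, paired with X = second row or all vertices but (2,k),
   form the standard example S_n, which admits no embedding into R^d for d < n. *)

definition right_orth :: "'v set \<Rightarrow> ('v \<Rightarrow> 'v \<Rightarrow> bool) \<Rightarrow> 'v set \<Rightarrow> 'v set" where
  "right_orth V E X = {v \<in> V. v \<notin> X \<and> (\<forall>x\<in>X. \<not> E x v)}"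

definition left_orth :: "'v set \<Rightarrow> ('v \<Rightarrow> 'v \<Rightarrow> bool) \<Rightarrow> 'v set \<Rightarrow> 'v set" where
  "left_orth V E Y = {v \<in> V. v \<notin> Y \<and> (\<forall>y\<in>Y. \<not> E v y)}"

lemma max_orth_pair_iff:
  "max_orth_pair V E (X, Y) \<longleftrightarrow> X \<subseteq> V \<and> Y = right_orth V E X \<and> X = left_orth V E Y"
proof
  assume max: "max_orth_pair V E (X, Y)"
  then have orth: "orth_pair V E (X, Y)"
    by (simp add: max_orth_pair_def)
  have "orth_pair V E (X, right_orth V E X)" "Y \<subseteq> right_orth V E X"
    using orth by (auto simp: orth_pair_def right_orth_def)
  then have "Y = right_orth V E X"
    using max unfolding max_orth_pair_def by fastforce
  moreover have "orth_pair V E (left_orth V E Y, Y)" "X \<subseteq> left_orth V E Y"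
    using orth by (auto simp: orth_pair_def left_orth_def)
  then have "X = left_orth V E Y"
    using max unfolding max_orth_pair_def by fastforce
  moreover have "X \<subseteq> V"
    using orth by (simp add: orth_pair_def)
  ultimately show "X \<subseteq> V \<and> Y = right_orth V E X \<and> X = left_orth V E Y"
    by blast
next
  assume "X \<subseteq> V \<and> Y = right_orth V E X \<and> X = left_orth V E Y"
  then have V: "X \<subseteq> V" and Y: "Y = right_orth V E X" and X: "X = left_orth V E Y"
    by blast+
  have orth: "orth_pair V E (X, Y)"
    using V unfolding Y by (auto simp: orth_pair_def right_orth_def)
  show "max_orth_pair V E (X, Y)"
    unfolding max_orth_pair_def
  proof (intro conjI allI impI orth)
    fix q
    assume q: "orth_pair V E q \<and> fst (X, Y) \<subseteq> fst q \<and> snd (X, Y) \<subseteq> snd q"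
    then have "fst q \<subseteq> left_orth V E Y" "snd q \<subseteq> right_orth V E X"
      by (auto simp: orth_pair_def right_orth_def left_orth_def)
    then have "fst q \<subseteq> X" "snd q \<subseteq> Y"
      unfolding X[symmetric] Y[symmetric] .
    with q show "q = (X, Y)"
      by (auto simp: prod_eq_iff)
  qed
qed

lemma max_orth_pairD:
  assumes "max_orth_pair V E (X, Y)"
  shows "X \<subseteq> V" "Y = right_orth V E X" "X = left_orth V E Y"
  using assms unfolding max_orth_pair_iff by blast+

lemma max_orth_pair_snd_unique:
  "max_orth_pair V E (X, Y) \<Longrightarrow> max_orth_pair V E (X, Y') \<Longrightarrow> Y = Y'"
  by (metis max_orth_pairD(2))

lemma max_orth_pair_no_edge:
  "max_orth_pair V E (X, Y) \<Longrightarrow> x \<in> X \<Longrightarrow> y \<in> Y \<Longrightarrow> \<not> E x y"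
  by (simp add: max_orth_pair_def orth_pair_def)

lemma max_orth_pair_notin_fst:
  assumes "max_orth_pair V E (X, Y)" "v \<in> V" "v \<notin> X"
  shows "v \<in> Y \<or> (\<exists>y\<in>Y. E v y)"
  using assms(2,3) unfolding max_orth_pairD(3)[OF assms(1)] by (auto simp: left_orth_def)

lemma max_orth_pairI:
  assumes "orth_pair V E (X, Y)"
    and "\<And>v. v \<in> V \<Longrightarrow> v \<notin> X \<Longrightarrow> v \<in> Y \<or> (\<exists>y\<in>Y. E v y)"
    and "\<And>v. v \<in> V \<Longrightarrow> v \<notin> Y \<Longrightarrow> v \<in> X \<or> (\<exists>x\<in>X. E x v)"
  shows "max_orth_pair V E (X, Y)"
  unfolding max_orth_pair_iff
  using assms by (auto simp: orth_pair_def right_orth_def left_orth_def) blast+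

lemma embeds_in_RdI:
  fixes f :: "'a \<Rightarrow> nat \<Rightarrow> real"
  assumes antisym: "\<And>x y. x \<in> S \<Longrightarrow> y \<in> S \<Longrightarrow> le x y \<Longrightarrow> le y x \<Longrightarrow> x = y"
    and coords: "\<And>x y. x \<in> S \<Longrightarrow> y \<in> S \<Longrightarrow> le x y \<longleftrightarrow> (\<forall>i<d. f x i \<le> f y i)"
  shows "embeds_in_Rd S le d"
  unfolding embeds_in_Rd_def
proof (intro exI conjI ballI inj_onI)
  fix x y
  assume "x \<in> S" "y \<in> S" "f x = f y"
  then have "le x y" "le y x"
    using coords by simp_all
  with \<open>x \<in> S\<close> \<open>y \<in> S\<close> show "x = y"
    by (rule antisym)
qed (use coords in blast)

text \<open>Each \<open>i\<close> needs a coordinate where \<open>Q i\<close> lies strictly below \<open>P i\<close>; no coordinate can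
  serve two indices \<open>i \<noteq> j\<close>, because \<open>P j \<le> Q i\<close> and \<open>P i \<le> Q j\<close>.\<close>

lemma standard_example_not_embeds_in_Rd:
  assumes "finite I" and "d < card I"
    and PQ: "\<And>i. i \<in> I \<Longrightarrow> P i \<in> S \<and> Q i \<in> S"
    and off_diag: "\<And>i j. i \<in> I \<Longrightarrow> j \<in> I \<Longrightarrow> i \<noteq> j \<Longrightarrow> le (P j) (Q i)"
    and diag: "\<And>i. i \<in> I \<Longrightarrow> \<not> le (P i) (Q i)"
  shows "\<not> embeds_in_Rd S le d"
proof
  assume "embeds_in_Rd S le d"
  then obtain f :: "_ \<Rightarrow> nat \<Rightarrow> real"
    where f: "\<forall>x\<in>S. \<forall>y\<in>S. le x y \<longleftrightarrow> (\<forall>c<d. f x c \<le> f y c)"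
    unfolding embeds_in_Rd_def by blast
  have "\<exists>c<d. f (Q i) c < f (P i) c" if "i \<in> I" for i
    using f PQ[OF that] diag[OF that] by (meson not_le)
  then obtain c where c: "\<And>i. i \<in> I \<Longrightarrow> c i < d \<and> f (Q i) (c i) < f (P i) (c i)"
    by metis
  have "\<not> inj_on c I"
  proof
    assume "inj_on c I"
    then have "card I \<le> card {..<d}"
      using c by (intro card_inj_on_le) auto
    then show False
      using \<open>d < card I\<close> by simp
  qed
  then obtain i j where ij: "i \<in> I" "j \<in> I" "i \<noteq> j" "c i = c j"
    unfolding inj_on_def by blast
  have "f (P j) (c i) \<le> f (Q i) (c i)" "f (P i) (c j) \<le> f (Q j) (c j)"
    using f PQ off_diag ij c by blast+
  with c[OF ij(1)] c[OF ij(2)] ij(4) show False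
    by simp
qed

lemma order_dimension_eqI:
  assumes "embeds_in_Rd S le n" and "\<And>d. d < n \<Longrightarrow> \<not> embeds_in_Rd S le d"
  shows "order_dimension S le = n"
  unfolding order_dimension_def
  using assms by (intro Least_equality) (auto simp: not_less[symmetric])

lemma finite_down_closed_eq_atLeastAtMost_card:
  fixes S :: "nat set"
  assumes "finite S" "0 \<notin> S"
    and down_closed: "\<And>j k. j \<in> S \<Longrightarrow> 1 \<le> k \<Longrightarrow> k \<le> j \<Longrightarrow> k \<in> S"
  shows "S = {1..card S}"
proof (cases "S = {}")
  case False
  have "S \<subseteq> {1..Max S}"
    using assms by (auto simp: Suc_le_eq intro: Max_ge gr0I)
  moreover have "{1..Max S} \<subseteq> S"
    using down_closed Max_in[OF \<open>finite S\<close> False] by auto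
  ultimately have "S = {1..Max S}"
    by (rule antisym)
  moreover from this have "card S = Max S"
    by (metis card_atLeastAtMost diff_Suc_1)
  ultimately show ?thesis
    by simp
qed simp

lemma Hoch_max_orth_pair: "p \<in> Hoch n \<Longrightarrow> max_orth_pair (Gn_vertices n) (Gn_edge n) (fst p, snd p)"
  by (simp add: Hoch_def L_carrier_def)

lemma Hoch_subset_vertices: "p \<in> Hoch n \<Longrightarrow> fst p \<subseteq> Gn_vertices n"
  using Hoch_max_orth_pair max_orth_pairD(1) by blast

lemma Hoch_eqI:
  assumes "p \<in> Hoch n" "q \<in> Hoch n" "fst p = fst q"
  shows "p = q"
proof -
  have "snd p = snd q"
    using Hoch_max_orth_pair[OF assms(1)] Hoch_max_orth_pair[OF assms(2)] assms(3)
    by (metis max_orth_pair_snd_unique)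
  with assms(3) show ?thesis
    by (simp add: prod_eq_iff)
qed

definition first_row :: "(nat \<times> nat) set \<Rightarrow> nat set" where
  "first_row X = {j. (1, j) \<in> X}"

text \<open>The edges inside the first row form a transitive tournament, so whatever blocks \<open>(1, k)\<close>
  from \<open>X\<close> also blocks every \<open>(1, j)\<close> with \<open>j > k\<close>.\<close>

lemma Hoch_first_row_down_closed:
  assumes p: "p \<in> Hoch n" and j: "(1, j) \<in> fst p" and k: "1 \<le> k" "k \<le> j"
  shows "(1, k) \<in> fst p"
proof (rule ccontr)
  let ?E = "Gn_edge n"
  note max = Hoch_max_orth_pair[OF p]
  assume k_notin: "(1, k) \<notin> fst p"
  have jV: "(1, j) \<in> Gn_vertices n"
    using Hoch_subset_vertices[OF p] j by blast
  then have kV: "(1, k) \<in> Gn_vertices n"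
    using k by (simp add: Gn_vertices_def)
  have "k < j"
    using j k k_notin by (cases "k = j") auto
  then have "?E (1, j) (1, k)"
    using jV kV by (simp add: Gn_edge_def)
  then have "(1, k) \<notin> snd p"
    using max_orth_pair_no_edge[OF max j] by blast
  then obtain y where y: "y \<in> snd p" "?E (1, k) y"
    using max_orth_pair_notin_fst[OF max kV k_notin] by blast
  then have "?E (1, j) y"
    using jV \<open>k < j\<close> by (auto simp: Gn_edge_def)
  with max_orth_pair_no_edge[OF max j y(1)] show False ..
qed

lemma Hoch_first_row_subset:
  assumes "p \<in> Hoch n"
  shows "first_row (fst p) \<subseteq> {1..n}"
  using Hoch_subset_vertices[OF assms] by (auto simp: first_row_def Gn_vertices_def)

lemma Hoch_first_row:
  assumes "p \<in> Hoch n"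
  shows "first_row (fst p) = {1..card (first_row (fst p))}"
proof (rule finite_down_closed_eq_atLeastAtMost_card)
  have "first_row (fst p) \<subseteq> {1..n}"
    by (rule Hoch_first_row_subset[OF assms])
  then show "finite (first_row (fst p))" "0 \<notin> first_row (fst p)"
    by (auto dest: finite_subset)
  show "k \<in> first_row (fst p)" if "j \<in> first_row (fst p)" "1 \<le> k" "k \<le> j" for j k
    using Hoch_first_row_down_closed[OF assms] that by (simp add: first_row_def)
qed

lemma Hoch_le_iff:
  assumes p: "p \<in> Hoch n" and q: "q \<in> Hoch n"
  shows "fst p \<subseteq> fst q \<longleftrightarrow>
    card (first_row (fst p)) \<le> card (first_row (fst q)) \<and>
    (\<forall>k. (2, k) \<in> fst p \<longrightarrow> (2, k) \<in> fst q)"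
proof
  assume "fst p \<subseteq> fst q"
  moreover have "finite (first_row (fst q))"
    using Hoch_first_row_subset[OF q] by (rule finite_subset) simp
  ultimately show "card (first_row (fst p)) \<le> card (first_row (fst q)) \<and>
    (\<forall>k. (2, k) \<in> fst p \<longrightarrow> (2, k) \<in> fst q)"
    by (auto simp: first_row_def intro!: card_mono)
next
  assume le: "card (first_row (fst p)) \<le> card (first_row (fst q)) \<and>
    (\<forall>k. (2, k) \<in> fst p \<longrightarrow> (2, k) \<in> fst q)"
  show "fst p \<subseteq> fst q"
  proof
    fix x
    assume x: "x \<in> fst p"
    then obtain a b where "x = (a, b)" and "a = 1 \<or> a = 2"
      using Hoch_subset_vertices[OF p] by (auto simp: Gn_vertices_def)
    then consider "x = (1, b)" | "x = (2, b)"
      by blast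
    then show "x \<in> fst q"
    proof cases
      case 1
      then have "b \<in> {1..card (first_row (fst p))}"
        using x Hoch_first_row[OF p] by (auto simp: first_row_def)
      then have "b \<in> first_row (fst q)"
        using le Hoch_first_row[OF q] by auto
      then show ?thesis
        using 1 by (simp add: first_row_def)
    qed (use x le in simp)
  qed
qed

definition Hoch_coords :: "(nat \<times> nat) set \<times> (nat \<times> nat) set \<Rightarrow> nat \<Rightarrow> real" where
  "Hoch_coords p i =
     (if i = 0 then real (card (first_row (fst p))) else of_bool ((2, i + 1) \<in> fst p))"

lemma Hoch_embeds_in_Rd:
  assumes "0 < n"
  shows "embeds_in_Rd (Hoch n) L_le n"
proof (rule embeds_in_RdI)
  show "p = q" if "p \<in> Hoch n" "q \<in> Hoch n" "L_le p q" "L_le q p" for p q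
    using that by (intro Hoch_eqI) (auto simp: L_le_def)
next
  fix p q
  assume p: "p \<in> Hoch n" and q: "q \<in> Hoch n"
  have second_row: "2 \<le> k \<and> k \<le> n" if "(2, k) \<in> fst p" for k
    using that Hoch_subset_vertices[OF p] by (auto simp: Gn_vertices_def)
  show "L_le p q \<longleftrightarrow> (\<forall>i<n. Hoch_coords p i \<le> Hoch_coords q i)"
    unfolding L_le_def Hoch_le_iff[OF p q]
  proof safe
    fix i
    assume "card (first_row (fst p)) \<le> card (first_row (fst q))"
      and "\<forall>k. (2, k) \<in> fst p \<longrightarrow> (2, k) \<in> fst q"
    then show "Hoch_coords p i \<le> Hoch_coords q i"
      by (simp add: Hoch_coords_def)
  next
    assume coords: "\<forall>i<n. Hoch_coords p i \<le> Hoch_coords q i"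
    from coords[rule_format, of 0] show "card (first_row (fst p)) \<le> card (first_row (fst q))"
      using assms by (simp add: Hoch_coords_def)
    fix k
    assume k: "(2, k) \<in> fst p"
    then have "2 \<le> k" "k \<le> n"
      using second_row by blast+
    then have "Hoch_coords p (k - 1) \<le> Hoch_coords q (k - 1)"
      using coords by simp
    with k \<open>2 \<le> k\<close> show "(2, k) \<in> fst q"
      by (simp add: Hoch_coords_def of_bool_def split: if_splits)
  qed
qed

lemma singleton_first_vertex_in_Hoch:
  assumes "1 \<le> n"
  shows "({(1, 1)}, Gn_vertices n - {(1, 1)}) \<in> Hoch n"
  unfolding Hoch_def L_carrier_def mem_Collect_eq
proof (rule max_orth_pairI)
  show "orth_pair (Gn_vertices n) (Gn_edge n) ({(1, 1)}, Gn_vertices n - {(1, 1)})"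
    using assms by (auto simp: orth_pair_def Gn_edge_def Gn_vertices_def)
qed auto

lemma singleton_second_row_in_Hoch:
  assumes "2 \<le> k" "k \<le> n"
  shows "({(2, k)}, Gn_vertices n - {(2, k), (1, k)}) \<in> Hoch n"
  unfolding Hoch_def L_carrier_def mem_Collect_eq
proof (rule max_orth_pairI)
  show "orth_pair (Gn_vertices n) (Gn_edge n) ({(2, k)}, Gn_vertices n - {(2, k), (1, k)})"
    using assms by (auto simp: orth_pair_def Gn_edge_def Gn_vertices_def)
  have "(1, 1) \<in> Gn_vertices n - {(2, k), (1, k)}" "Gn_edge n (1, k) (1, 1)"
    using assms by (auto simp: Gn_edge_def Gn_vertices_def)
  then show "v \<in> Gn_vertices n - {(2, k), (1, k)} \<or>
      (\<exists>y\<in>Gn_vertices n - {(2, k), (1, k)}. Gn_edge n v y)"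
    if "v \<in> Gn_vertices n" "v \<notin> {(2, k)}" for v
    using that by blast
  have "Gn_edge n (2, k) (1, k)"
    using assms by (auto simp: Gn_edge_def Gn_vertices_def)
  then show "v \<in> {(2, k)} \<or> (\<exists>x\<in>{(2, k)}. Gn_edge n x v)"
    if "v \<in> Gn_vertices n" "v \<notin> Gn_vertices n - {(2, k), (1, k)}" for v
    using that by blast
qed

lemma second_row_in_Hoch:
  assumes "1 \<le> n"
  shows "({v \<in> Gn_vertices n. fst v = 2}, {(1, 1)}) \<in> Hoch n"
  unfolding Hoch_def L_carrier_def mem_Collect_eq
proof (rule max_orth_pairI)
  show "orth_pair (Gn_vertices n) (Gn_edge n) ({v \<in> Gn_vertices n. fst v = 2}, {(1, 1)})"
    using assms by (auto simp: orth_pair_def Gn_edge_def Gn_vertices_def)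
  show "v \<in> {(1, 1)} \<or> (\<exists>y\<in>{(1, 1)}. Gn_edge n v y)"
    if "v \<in> Gn_vertices n" "v \<notin> {v \<in> Gn_vertices n. fst v = 2}" for v
    using that by (auto simp: Gn_edge_def Gn_vertices_def)
  show "v \<in> {v \<in> Gn_vertices n. fst v = 2} \<or>
      (\<exists>x\<in>{v \<in> Gn_vertices n. fst v = 2}. Gn_edge n x v)"
    if v: "v \<in> Gn_vertices n" and not_11: "v \<notin> {(1, 1)}" for v
  proof -
    obtain i j where "v = (i, j)" "i = 1 \<or> i = 2" "i \<le> j" "j \<le> n"
      using v by (cases v) (auto simp: Gn_vertices_def)
    moreover from this have "(2, j) \<in> Gn_vertices n" "Gn_edge n (2, j) v" if "i = 1"
      using that not_11 by (auto simp: Gn_edge_def Gn_vertices_def)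
    ultimately show ?thesis
      by (auto simp: Gn_vertices_def)
  qed
qed

lemma vertices_minus_second_row_in_Hoch:
  assumes "2 \<le> k" "k \<le> n"
  shows "(Gn_vertices n - {(2, k)}, {(2, k)}) \<in> Hoch n"
  unfolding Hoch_def L_carrier_def mem_Collect_eq
proof (rule max_orth_pairI)
  show "orth_pair (Gn_vertices n) (Gn_edge n) (Gn_vertices n - {(2, k)}, {(2, k)})"
    using assms by (auto simp: orth_pair_def Gn_edge_def Gn_vertices_def)
qed auto

lemma Hoch_not_embeds_in_Rd:
  assumes "d < n"
  shows "\<not> embeds_in_Rd (Hoch n) L_le d"
proof -
  define P :: "nat \<Rightarrow> (nat \<times> nat) set \<times> (nat \<times> nat) set"
    where "P k = (if k = 1 then ({(1, 1)}, Gn_vertices n - {(1, 1)})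
      else ({(2, k)}, Gn_vertices n - {(2, k), (1, k)}))" for k
  define Q :: "nat \<Rightarrow> (nat \<times> nat) set \<times> (nat \<times> nat) set"
    where "Q k = (if k = 1 then ({v \<in> Gn_vertices n. fst v = 2}, {(1, 1)})
      else (Gn_vertices n - {(2, k)}, {(2, k)}))" for k
  show ?thesis
  proof (rule standard_example_not_embeds_in_Rd[where I = "{1..n}" and P = P and Q = Q])
    show "finite {1..n}" "d < card {1..n}"
      using assms by simp_all
    show "P k \<in> Hoch n \<and> Q k \<in> Hoch n" if k: "k \<in> {1..n}" for k
    proof (cases "k = 1")
      case True
      from k have "1 \<le> n"
        by simp
      with True show ?thesis
        using singleton_first_vertex_in_Hoch second_row_in_Hoch by (simp add: P_def Q_def)
    next
      case False
      with k have "2 \<le> k" "k \<le> n"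
        by auto
      with False show ?thesis
        using singleton_second_row_in_Hoch vertices_minus_second_row_in_Hoch
        by (simp add: P_def Q_def)
    qed
    show "L_le (P j) (Q i)" if "i \<in> {1..n}" "j \<in> {1..n}" "i \<noteq> j" for i j
      using that by (auto simp: P_def Q_def L_le_def Gn_vertices_def)
    show "\<not> L_le (P k) (Q k)" if "k \<in> {1..n}" for k
      using that by (simp add: P_def Q_def L_le_def)
  qed
qed

theorem proposition4p3:
  fixes n :: nat
  assumes "n > 0"
  shows "order_dimension (Hoch n) L_le = n"
  using Hoch_embeds_in_Rd[OF assms] Hoch_not_embeds_in_Rd by (rule order_dimension_eqI)

end
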